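(* Let $A\in\mathbb{R}^{n\times n}$ and $b\in\mathbb{R}^n$, and consider the generalized Newton method (GNM) for the absolute value equation $Ax-|x|-b=0$: starting from an initial $x^0\in\mathbb{R}^n$, compute $x^{k+1}=[A-\mathcal{D}(x^k)]^{-1}b$ for $k=0,1,2,\dots$. Suppose that $A$ satisfies either (a) $A-I$ is an $M$-matrix, or (b) $\mathcal{N}(A^\top-I)=\mathrm{span}(v)$ for some vector $v>0$, and $A-I+D$ is an $M$-matrix for every diagonal matrix $D=\mathrm{diag}(d)$ with $d\ge 0$ and $d\neq 0$. If $A$ satisfies (b), assume in addition that $\mathcal{D}(x^0)\neq I$ and $v^\top b<0$. Then GNM converges to an exact solution of $Ax-|x|-b=0$ in at most $2n+2$ iterations.
   Context: For $x\in\mathbb{R}^n$, $|x|=(|x_1|,\dots,|x_n|)^\top$, and $\mathcal{D}(x)=\mathrm{diag}(\mathrm{sign}(x))$, where $\mathrm{sign}(x)$ is the vector whose $i$th component is $-1$, $0$, or $1$ according as $x_i<0$, $x_i=0$, or $x_i>0$. A matrix is a $Z$-matrix if all its off-diagonal entries are $\le 0$; a $Z$-matrix $A$ is an $M$-matrix if $A$ is nonsingular and $A^{-1}\ge 0$ (entrywise). Vector and matrix inequalities are entrywise; $v>0$ means all entries of $v$ are strictly positive. $\mathcal{N}(X)$ denotes the null space of $X$. *)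

theory Defs
  imports "HOL-Analysis.Analysis"
begin

definition vabs :: "real^'n \<Rightarrow> real^'n" where
  "vabs x = (\<chi> i. \<bar>x $ i\<bar>)"

definition diagm :: "real^'n \<Rightarrow> real^'n^'n" where
  "diagm d = (\<chi> i j. if i = j then d $ i else 0)"

definition Dsign :: "real^'n \<Rightarrow> real^'n^'n" where
  "Dsign x = diagm (\<chi> i. sgn (x $ i))"

definition Z_matrix :: "real^'n^'n \<Rightarrow> bool" where
  "Z_matrix A \<longleftrightarrow> (\<forall>i j. i \<noteq> j \<longrightarrow> A $ i $ j \<le> 0)"

definition M_matrix :: "real^'n^'n \<Rightarrow> bool" where
  "M_matrix A \<longleftrightarrow> Z_matrix A \<and> invertible A \<and> (\<forall>i j. matrix_inv A $ i $ j \<ge> 0)"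

definition null_space :: "real^'n^'n \<Rightarrow> (real^'n) set" where
  "null_space X = {y. X *v y = 0}"

definition gnm_seq :: "real^'n^'n \<Rightarrow> real^'n \<Rightarrow> (nat \<Rightarrow> real^'n) \<Rightarrow> bool" where
  "gnm_seq A b x \<longleftrightarrow> (\<forall>k. x (Suc k) = matrix_inv (A - Dsign (x k)) *v b)"

end

theory Submission
  imports Defs
begin

text \<open>
  Each iteration matrix A - D(x_k) is monotone (inverse-nonnegative). In case (a) it is a
  Z-matrix that is positive on the positive vector u with (A - I)u = 1, because D(x_k) <= I.
  In case (b) it equals A - I + diag(1 - sign x_k), an M-matrix as long as D(x_k) /= I, and this
  persists along the iteration: a positive iterate x_{k+1} would give
  v'b = v'(I - D(x_k)) x_{k+1} >= 0.
  Monotonicity makes the iterates nondecreasing from x_1 on, since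
  (A - D(x_k))(x_{k+1} - x_k) = |x_k| - D(x_{k-1}) x_k >= 0. So signs only move upwards, and
  while the sign pattern keeps changing, the sign sum of x_k, which lies in [-n, n], grows by at
  least one per step. Once the pattern repeats, D(x_{k+1}) x_{k+1} = |x_{k+1}| turns the Newton
  equation into the absolute value equation.
\<close>

lemma matrix_inv_inverse:
  fixes A :: "'a::semiring_1^'n^'m"
  assumes "invertible A"
  shows "A ** matrix_inv A = mat 1" "matrix_inv A ** A = mat 1"
proof -
  have "A ** matrix_inv A = mat 1 \<and> matrix_inv A ** A = mat 1"
    using assms unfolding invertible_def matrix_inv_def by (rule someI_ex)
  then show "A ** matrix_inv A = mat 1" "matrix_inv A ** A = mat 1" by auto
qed

lemma diagm_mult_vector_component: "(diagm d *v y) $ i = d $ i * y $ i"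
proof -
  have "(diagm d *v y) $ i = (\<Sum>j\<in>UNIV. (if i = j then d $ i else 0) * y $ j)"
    unfolding matrix_vector_mult_def diagm_def by simp
  also have "\<dots> = (\<Sum>j\<in>UNIV. if i = j then d $ i * y $ j else 0)"
    by (rule sum.cong) auto
  finally show ?thesis by simp
qed

lemma Dsign_mult_vector_component: "(Dsign z *v y) $ i = sgn (z $ i) * y $ i"
  unfolding Dsign_def diagm_mult_vector_component by simp

lemma Dsign_mult_self: "Dsign y *v y = vabs y"
  by (simp add: vec_eq_iff Dsign_mult_vector_component vabs_def abs_sgn mult.commute)

lemma Dsign_mult_le_vabs: "Dsign z *v y \<le> vabs y"
  by (auto simp: less_eq_vec_def Dsign_mult_vector_component vabs_def sgn_if)

lemma Dsign_eq_iff: "Dsign y = Dsign z \<longleftrightarrow> (\<forall>i. sgn (y $ i) = sgn (z $ i))"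
  by (auto simp: Dsign_def diagm_def vec_eq_iff)

lemma Dsign_eq_mat_1_iff: "Dsign y = mat 1 \<longleftrightarrow> (\<forall>i. 0 < y $ i)"
  by (auto simp: Dsign_def diagm_def mat_def vec_eq_iff sgn_if)

definition monotone_matrix :: "real^'n^'n \<Rightarrow> bool" where
  "monotone_matrix B \<longleftrightarrow> (\<forall>y. 0 \<le> B *v y \<longrightarrow> 0 \<le> y)"

lemma monotone_matrix_invertible:
  fixes B :: "real^'n::finite^'n"
  assumes "monotone_matrix B"
  shows "invertible B"
proof -
  have "y = 0" if "B *v y = 0" for y
  proof -
    have "B *v (- y) = 0"
      using that matrix_vector_mult_diff_distrib[of B 0 y] by simp
    then have "0 \<le> y" "0 \<le> - y"
      using assms that unfolding monotone_matrix_def by (metis order_refl)+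
    then show "y = 0" by (simp add: less_eq_vec_def vec_eq_iff antisym)
  qed
  then show ?thesis using invertible_left_inverse matrix_left_invertible_ker by blast
qed

lemma M_matrix_monotone:
  fixes B :: "real^'n::finite^'n"
  assumes "M_matrix B"
  shows "monotone_matrix B"
  unfolding monotone_matrix_def
proof (intro allI impI)
  fix y :: "real^'n"
  assume By: "0 \<le> B *v y"
  have "y = matrix_inv B *v (B *v y)"
    using assms by (simp add: M_matrix_def matrix_vector_mul_assoc matrix_inv_inverse)
  also have "0 \<le> matrix_inv B *v (B *v y)"
    using assms By unfolding M_matrix_def
    by (auto simp: less_eq_vec_def matrix_vector_mult_def intro!: sum_nonneg)
  finally show "0 \<le> y" .
qed

lemma M_matrix_positive_vector:
  fixes B :: "real^'n::finite^'n"
  assumes "M_matrix B"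
  obtains u where "\<forall>i. 0 < u $ i" and "B *v u = 1"
proof
  have inv: "invertible B" and nonneg: "\<forall>i j. 0 \<le> matrix_inv B $ i $ j"
    using assms unfolding M_matrix_def by auto
  define u where "u = matrix_inv B *v 1"
  show "B *v u = 1"
    unfolding u_def by (simp add: matrix_vector_mul_assoc matrix_inv_inverse[OF inv])
  show "\<forall>i. 0 < u $ i"
  proof
    fix i
    have ui: "u $ i = (\<Sum>j\<in>UNIV. matrix_inv B $ i $ j)"
      by (simp add: u_def matrix_vector_mult_def one_vec_def)
    have "u $ i \<noteq> 0"
    proof
      assume "u $ i = 0"
      then have "\<forall>j. matrix_inv B $ i $ j = 0"
        unfolding ui using nonneg by (simp add: sum_nonneg_eq_0_iff)
      then have "(matrix_inv B ** B) $ i $ i = 0" by (simp add: matrix_matrix_mult_def)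
      then show False by (simp add: matrix_inv_inverse[OF inv] mat_def)
    qed
    moreover have "0 \<le> u $ i" unfolding ui using nonneg by (simp add: sum_nonneg)
    ultimately show "0 < u $ i" by simp
  qed
qed

lemma Z_matrix_monotone:
  fixes B :: "real^'n::finite^'n"
  assumes Z: "Z_matrix B" and u: "\<forall>i. 0 < u $ i" and Bu: "\<forall>i. 0 < (B *v u) $ i"
  shows "monotone_matrix B"
  unfolding monotone_matrix_def
proof (intro allI impI)
  fix y :: "real^'n"
  assume By: "0 \<le> B *v y"
  show "0 \<le> y"
  proof (rule ccontr)
    assume "\<not> 0 \<le> y"
    then obtain i0 where "y $ i0 < 0" by (auto simp: less_eq_vec_def not_le)
    \<comment> \<open>\<open>t\<close> is the least factor with \<open>y \<ge> -t u\<close>; the row \<open>i\<close> where this is tight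
      gives \<open>(B y)\<^sub>i \<le> -t (B u)\<^sub>i < 0\<close>, since off the diagonal \<open>B\<close> is nonpositive.\<close>
    define f where "f j = - y $ j / u $ j" for j
    define t where "t = Max (range f)"
    have "t \<in> range f" unfolding t_def by (rule Max_in) auto
    then obtain i where ti: "t = f i" by auto
    have f_le: "f j \<le> t" for j unfolding t_def by (rule Max_ge) auto
    have "0 < f i0" using \<open>y $ i0 < 0\<close> u unfolding f_def by (simp add: divide_neg_pos)
    then have "0 < t" using f_le[of i0] by simp
    have yi: "y $ i = - t * u $ i"
      using ti u[rule_format, of i] unfolding f_def by (simp add: field_simps)
    have yj: "- t * u $ j \<le> y $ j" for j
      using f_le[of j] u[rule_format, of j] unfolding f_def by (simp add: field_simps)
    have "(B *v y) $ i = (\<Sum>j\<in>UNIV. B $ i $ j * y $ j)" by (simp add: matrix_vector_mult_def)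
    also have "\<dots> \<le> (\<Sum>j\<in>UNIV. B $ i $ j * (- t * u $ j))"
    proof (rule sum_mono)
      fix j
      show "B $ i $ j * y $ j \<le> B $ i $ j * (- t * u $ j)"
      proof (cases "j = i")
        case False
        then have "B $ i $ j \<le> 0" using Z unfolding Z_matrix_def by auto
        then show ?thesis using mult_left_mono_neg[OF yj] by simp
      qed (simp add: yi)
    qed
    also have "\<dots> = - t * (B *v u) $ i"
      by (simp add: matrix_vector_mult_def sum_distrib_left algebra_simps)
    also have "\<dots> < 0" using \<open>0 < t\<close> Bu by simp
    finally have "(B *v y) $ i < 0" .
    with By show False by (metis less_eq_vec_def not_le zero_index)
  qed
qed

lemma M_matrix_minus_diagm_monotone:
  fixes A :: "real^'n::finite^'n"
  assumes M: "M_matrix (A - mat 1)" and d: "\<forall>i. d $ i \<le> 1"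
  shows "monotone_matrix (A - diagm d)"
proof -
  obtain u where u: "\<forall>i. 0 < u $ i" and Mu: "(A - mat 1) *v u = 1"
    using M_matrix_positive_vector[OF M] by blast
  have "0 < ((A - diagm d) *v u) $ i" for i
  proof -
    have "d $ i * u $ i \<le> u $ i" using d u by (simp add: mult_left_le_one_le less_imp_le)
    moreover have "(A *v u) $ i - u $ i = 1"
      using arg_cong[OF Mu, of "\<lambda>w. w $ i"] by (simp add: matrix_vector_mult_diff_rdistrib)
    ultimately show ?thesis
      by (simp add: matrix_vector_mult_diff_rdistrib diagm_mult_vector_component)
  qed
  moreover have "Z_matrix (A - diagm d)"
    using M unfolding M_matrix_def Z_matrix_def diagm_def mat_def by simp
  ultimately show ?thesis using Z_matrix_monotone u by blast
qed

lemma M_matrix_minus_Dsign: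
  fixes A :: "real^'n::finite^'n"
  assumes M: "\<And>d. 0 \<le> d \<Longrightarrow> d \<noteq> 0 \<Longrightarrow> M_matrix (A - mat 1 + diagm d)"
    and z: "Dsign z \<noteq> mat 1"
  shows "M_matrix (A - Dsign z)"
proof -
  define d where "d = (\<chi> i. 1 - sgn (z $ i))"
  have "A - mat 1 + diagm d = A - Dsign z"
    unfolding d_def Dsign_def diagm_def mat_def by (simp add: vec_eq_iff)
  moreover have "0 \<le> d" unfolding d_def by (auto simp: less_eq_vec_def sgn_if)
  moreover have "d \<noteq> 0"
    using z unfolding d_def Dsign_eq_mat_1_iff by (auto simp: vec_eq_iff sgn_if split: if_splits)
  ultimately show ?thesis using M by metis
qed

lemma left_fixed_vector_excludes_positive_solution:
  fixes A :: "real^'n::finite^'n"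
  assumes v: "\<forall>i. 0 < v $ i" and vA: "v v* A = v" and vb: "v \<bullet> b < 0"
    and eq: "(A - Dsign z) *v y = b"
  shows "Dsign y \<noteq> mat 1"
proof
  assume "Dsign y = mat 1"
  then have y: "\<forall>i. 0 < y $ i" by (simp add: Dsign_eq_mat_1_iff)
  have "v \<bullet> b = v \<bullet> (A *v y) - v \<bullet> (Dsign z *v y)"
    by (simp add: eq[symmetric] matrix_vector_mult_diff_rdistrib inner_diff_right)
  also have "v \<bullet> (A *v y) = v \<bullet> y"
    using dot_lmul_matrix[of v A y] vA by simp
  also have "v \<bullet> y - v \<bullet> (Dsign z *v y) = (\<Sum>i\<in>UNIV. v $ i * ((1 - sgn (z $ i)) * y $ i))"
    by (simp add: inner_vec_def Dsign_mult_vector_component sum_subtractf[symmetric] algebra_simps)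
  also have "\<dots> \<ge> 0"
    using v y by (intro sum_nonneg mult_nonneg_nonneg) (auto simp: sgn_if less_imp_le)
  finally show False using vb by simp
qed

lemma sum_sgn_bounds:
  fixes y :: "real^'n::finite"
  shows "- real CARD('n) \<le> (\<Sum>i\<in>UNIV. sgn (y $ i))" "(\<Sum>i\<in>UNIV. sgn (y $ i)) \<le> real CARD('n)"
proof -
  have "(\<Sum>i::'n\<in>UNIV. - 1) \<le> (\<Sum>i\<in>UNIV. sgn (y $ i))"
    by (rule sum_mono) (simp add: sgn_if)
  then show "- real CARD('n) \<le> (\<Sum>i\<in>UNIV. sgn (y $ i))" by simp
  have "(\<Sum>i\<in>UNIV. sgn (y $ i)) \<le> (\<Sum>i::'n\<in>UNIV. 1)"
    by (rule sum_mono) (simp add: sgn_if)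
  then show "(\<Sum>i\<in>UNIV. sgn (y $ i)) \<le> real CARD('n)" by simp
qed

lemma sum_sgn_increases_if_sign_changes:
  fixes y z :: "real^'n::finite"
  assumes le: "y \<le> z" and ne: "Dsign z \<noteq> Dsign y"
  shows "(\<Sum>i\<in>UNIV. sgn (y $ i)) + 1 \<le> (\<Sum>i\<in>UNIV. sgn (z $ i))"
proof -
  obtain i0 where i0: "sgn (y $ i0) \<noteq> sgn (z $ i0)"
    using ne by (metis Dsign_eq_iff)
  have "(\<Sum>i\<in>UNIV. sgn (y $ i)) + 1 = (\<Sum>i\<in>UNIV. sgn (y $ i) + (if i = i0 then 1 else 0))"
    by (simp add: sum.distrib)
  also have "\<dots> \<le> (\<Sum>i\<in>UNIV. sgn (z $ i))"
  proof (rule sum_mono)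
    fix i
    have "y $ i \<le> z $ i" using le by (simp add: less_eq_vec_def)
    then show "sgn (y $ i) + (if i = i0 then 1 else 0) \<le> sgn (z $ i)"
      using i0 by (cases "i = i0") (auto simp: sgn_if split: if_splits)
  qed
  finally show ?thesis .
qed

lemma increasing_sign_changes_bound:
  fixes y :: "nat \<Rightarrow> real^'n::finite"
  assumes le: "\<And>k. k < m \<Longrightarrow> y k \<le> y (Suc k)"
    and ne: "\<And>k. k < m \<Longrightarrow> Dsign (y (Suc k)) \<noteq> Dsign (y k)"
  shows "m \<le> 2 * CARD('n)"
proof -
  define s where "s k = (\<Sum>i\<in>UNIV. sgn (y k $ i))" for k
  have "s 0 + real k \<le> s k" if "k \<le> m" for k
    using that
  proof (induction k)
    case (Suc k)
    then have "s k + 1 \<le> s (Suc k)"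
      unfolding s_def by (intro sum_sgn_increases_if_sign_changes le ne) simp_all
    with Suc show ?case by simp
  qed simp
  from this[of m] show ?thesis
    using sum_sgn_bounds[of "y 0"] sum_sgn_bounds[of "y m"] unfolding s_def by simp
qed

lemma gnm_seq_equation:
  assumes "gnm_seq A b x" and "invertible (A - Dsign (x k))"
  shows "(A - Dsign (x k)) *v x (Suc k) = b"
  using assms by (simp add: gnm_seq_def matrix_vector_mul_assoc matrix_inv_inverse)

lemma gnm_seq_increasing:
  fixes A :: "real^'n::finite^'n"
  assumes gnm: "gnm_seq A b x" and mono: "\<And>k. monotone_matrix (A - Dsign (x k))"
  shows "x (Suc k) \<le> x (Suc (Suc k))"
proof -
  have eq: "(A - Dsign (x j)) *v x (Suc j) = b" for j
    using gnm mono monotone_matrix_invertible gnm_seq_equation by blast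
  have "(A - Dsign (x (Suc k))) *v (x (Suc (Suc k)) - x (Suc k))
      = b - A *v x (Suc k) + Dsign (x (Suc k)) *v x (Suc k)"
    using eq[of "Suc k"] by (simp add: matrix_vector_mult_diff_distrib matrix_vector_mult_diff_rdistrib)
  also have "\<dots> = vabs (x (Suc k)) - Dsign (x k) *v x (Suc k)"
    using eq[of k] by (auto simp: Dsign_mult_self matrix_vector_mult_diff_rdistrib)
  finally have "0 \<le> (A - Dsign (x (Suc k))) *v (x (Suc (Suc k)) - x (Suc k))"
    using Dsign_mult_le_vabs by simp
  then have "0 \<le> x (Suc (Suc k)) - x (Suc k)"
    using mono[of "Suc k"] unfolding monotone_matrix_def by blast
  then show ?thesis by (simp add: less_eq_vec_def)
qed

lemma gnm_seq_solution_if_sign_repeats: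
  fixes A :: "real^'n::finite^'n"
  assumes "gnm_seq A b x" and "invertible (A - Dsign (x k))"
    and "Dsign (x (Suc k)) = Dsign (x k)"
  shows "A *v x (Suc k) - vabs (x (Suc k)) = b"
  using gnm_seq_equation[OF assms(1,2)] assms(3)
  by (simp add: Dsign_mult_self[symmetric] matrix_vector_mult_diff_rdistrib)

lemma mem_null_space_transpose_minus_1_iff:
  fixes A :: "real^'n::finite^'n"
  shows "v \<in> null_space (transpose A - mat 1) \<longleftrightarrow> v v* A = v"
  by (simp add: null_space_def matrix_vector_mult_diff_rdistrib)

lemma gnm_seq_Dsign_ne_mat_1:
  fixes A :: "real^'n::finite^'n"
  assumes gnm: "gnm_seq A b x"
    and v: "\<forall>i. 0 < v $ i" "v v* A = v" "v \<bullet> b < 0"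
    and inv: "\<And>z. Dsign z \<noteq> mat 1 \<Longrightarrow> invertible (A - Dsign z)"
    and x0: "Dsign (x 0) \<noteq> mat 1"
  shows "Dsign (x k) \<noteq> mat 1"
proof (induction k)
  case (Suc k)
  then show ?case
    using left_fixed_vector_excludes_positive_solution[OF v] gnm_seq_equation[OF gnm] inv
    by blast
qed (rule x0)

lemma gnm_seq_monotone_if_left_fixed_vector:
  fixes A :: "real^'n::finite^'n"
  assumes gnm: "gnm_seq A b x"
    and v: "\<forall>i. 0 < v $ i" "v v* A = v" "v \<bullet> b < 0"
    and M: "\<And>d. 0 \<le> d \<Longrightarrow> d \<noteq> 0 \<Longrightarrow> M_matrix (A - mat 1 + diagm d)"
    and x0: "Dsign (x 0) \<noteq> mat 1"
  shows "monotone_matrix (A - Dsign (x k))"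
proof -
  have "Dsign (x k) \<noteq> mat 1"
    using gnm_seq_Dsign_ne_mat_1[OF gnm v _ x0] M_matrix_minus_Dsign[OF M]
    unfolding M_matrix_def by blast
  then show ?thesis by (intro M_matrix_monotone M_matrix_minus_Dsign M)
qed

theorem theorem3p1:
  fixes A :: "real^'n::finite^'n" and b :: "real^'n" and x :: "nat \<Rightarrow> real^'n"
  assumes gnm: "gnm_seq A b x"
    and cond: "M_matrix (A - mat 1) \<or>
      (\<exists>v::real^'n. (\<forall>i. v $ i > 0)
         \<and> null_space (transpose A - mat 1) = span {v}
         \<and> (\<forall>d::real^'n. (\<forall>i. d $ i \<ge> 0) \<and> d \<noteq> 0 \<longrightarrow> M_matrix (A - mat 1 + diagm d))
         \<and> Dsign (x 0) \<noteq> mat 1 \<and> v \<bullet> b < 0)"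
  shows "(\<forall>k. invertible (A - Dsign (x k))) \<and>
         (\<exists>k \<le> 2 * CARD('n) + 2. A *v x k - vabs (x k) = b)"
proof -
  have mono: "monotone_matrix (A - Dsign (x k))" for k
    using cond
  proof (elim disjE exE conjE)
    assume "M_matrix (A - mat 1)"
    then show ?thesis
      unfolding Dsign_def by (rule M_matrix_minus_diagm_monotone) (simp add: sgn_if)
  next
    fix v :: "real^'n"
    assume v: "\<forall>i. 0 < v $ i" and null: "null_space (transpose A - mat 1) = span {v}"
      and M: "\<forall>d. (\<forall>i. 0 \<le> d $ i) \<and> d \<noteq> 0 \<longrightarrow> M_matrix (A - mat 1 + diagm d)"
      and x0: "Dsign (x 0) \<noteq> mat 1" and vb: "v \<bullet> b < 0"
    have "v v* A = v"
      using span_base[of v "{v}"] unfolding null[symmetric] mem_null_space_transpose_minus_1_iff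
      by simp
    with v vb M x0 show ?thesis
      by (intro gnm_seq_monotone_if_left_fixed_vector[OF gnm]) (auto simp: less_eq_vec_def)
  qed
  then have inv: "invertible (A - Dsign (x k))" for k by (rule monotone_matrix_invertible)
  have "\<exists>k \<le> 2 * CARD('n) + 2. A *v x k - vabs (x k) = b"
  proof (rule ccontr)
    assume none: "\<not> ?thesis"
    have "2 * CARD('n) + 1 \<le> 2 * CARD('n)"
    proof (rule increasing_sign_changes_bound[where y = "\<lambda>k. x (Suc k)"])
      show "x (Suc k) \<le> x (Suc (Suc k))" for k by (rule gnm_seq_increasing[OF gnm mono])
      show "Dsign (x (Suc (Suc k))) \<noteq> Dsign (x (Suc k))" if "k < 2 * CARD('n) + 1" for k
        using none that gnm_seq_solution_if_sign_repeats[OF gnm inv, of "Suc k"] by auto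
    qed
    then show False by simp
  qed
  with inv show ?thesis by blast
qed

end
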